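(* Every (finite or infinite) half graph $\Gamma$ with $|V(\Gamma)|\geq 4$ is prime.
   Context: A bipartite graph $\Gamma$ with bipartition $\{X,Y\}$ is a half graph if there exist a linear order $L$ on $X$ and a bijection $\varphi:X\to Y$ with $E(\Gamma)=\{\{x,\varphi(x')\}: x\leq x'\bmod L\}$. A module of a graph is a set $M$ of vertices such that every vertex outside $M$ is adjacent to all or none of $M$; $\emptyset$, $V(\Gamma)$ and singletons are trivial; $\Gamma$ is prime if $|V(\Gamma)|\geq3$ and all modules are trivial. *)

theory Defs
  imports Main
begin

definition adj :: "'a set set \<Rightarrow> 'a \<Rightarrow> 'a \<Rightarrow> bool" where
  "adj E u v \<longleftrightarrow> {u, v} \<in> E"

definition half_graph :: "'a set \<Rightarrow> 'a set set \<Rightarrow> bool" where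
  "half_graph V E \<longleftrightarrow>
     (\<exists>X Y L \<phi>. X \<inter> Y = {} \<and> V = X \<union> Y \<and>
        linear_order_on X L \<and> bij_betw \<phi> X Y \<and>
        E = {{x, \<phi> x'} | x x'. x \<in> X \<and> x' \<in> X \<and> (x, x') \<in> L})"

definition is_module :: "'a set \<Rightarrow> 'a set set \<Rightarrow> 'a set \<Rightarrow> bool" where
  "is_module V E M \<longleftrightarrow> M \<subseteq> V \<and>
     (\<forall>v \<in> V - M. (\<forall>m \<in> M. adj E v m) \<or> (\<forall>m \<in> M. \<not> adj E v m))"

definition trivial_module :: "'a set \<Rightarrow> 'a set \<Rightarrow> bool" where
  "trivial_module V M \<longleftrightarrow> M = {} \<or> M = V \<or> (\<exists>x. M = {x})"

definition card_ge :: "'a set \<Rightarrow> nat \<Rightarrow> bool" where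
  "card_ge V n \<longleftrightarrow> infinite V \<or> n \<le> card V"

definition prime_graph :: "'a set \<Rightarrow> 'a set set \<Rightarrow> bool" where
  "prime_graph V E \<longleftrightarrow> card_ge V 3 \<and> (\<forall>M. is_module V E M \<longrightarrow> trivial_module V M)"

end

theory Submission
  imports Defs
begin

text \<open>Write \<open>x \<le> x'\<close> for the order \<open>L\<close>, so that \<open>x\<close> is adjacent to \<open>\<phi> x'\<close> iff \<open>x \<le> x'\<close>.
  A vertex outside a module cannot separate two of its members. Hence a module \<open>M\<close>
  containing some \<open>x \<in> X\<close> and some \<open>\<phi> y\<close> also contains every \<open>c \<le> y\<close> (adjacent to \<open>\<phi> y\<close>
  but not to \<open>x\<close>) and every \<open>\<phi> c\<close> with \<open>x \<le> c\<close> (adjacent to \<open>x\<close> but not to \<open>\<phi> y\<close>).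
  Starting from such a pair one first gets some \<open>z\<close> with \<open>z, \<phi> z \<in> M\<close> and then, comparing
  an arbitrary \<open>d\<close> with \<open>z\<close>, both \<open>d\<close> and \<open>\<phi> d\<close>. Two distinct members of \<open>M\<close> on the
  same side yield such a pair: for \<open>a < b\<close> in \<open>X\<close>, \<open>\<phi> a\<close> separates \<open>a\<close> from \<open>b\<close>, and
  for \<open>\<phi> a, \<phi> b\<close> the vertex \<open>b\<close> separates them. So every module with two elements is
  the whole vertex set; the bound \<open>|V| \<ge> 4\<close> only serves to give \<open>|V| \<ge> 3\<close>.\<close>

lemma adj_commute: "adj E u v \<longleftrightarrow> adj E v u"
  unfolding adj_def by (simp add: insert_commute)

lemma module_mem_if_separates:
  assumes "is_module V E M" "v \<in> V" "m \<in> M" "m' \<in> M" "adj E v m" "\<not> adj E v m'"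
  shows "v \<in> M"
  using assms unfolding is_module_def by blast

locale half_graph_repr =
  fixes V :: "'a set" and E :: "'a set set" and X :: "'a set" and L :: "'a rel"
    and \<phi> :: "'a \<Rightarrow> 'a"
  assumes vertices: "V = X \<union> \<phi> ` X"
    and disjoint: "X \<inter> \<phi> ` X = {}"
    and inj: "inj_on \<phi> X"
    and order: "linear_order_on X L"
    and edges: "E = {{x, \<phi> x'} | x x'. x \<in> X \<and> x' \<in> X \<and> (x, x') \<in> L}"
begin

lemma L_refl: "x \<in> X \<Longrightarrow> (x, x) \<in> L"
  using order by (auto simp: linear_order_on_def partial_order_on_def preorder_on_def
      refl_on_def)

lemma L_antisym: "(x, y) \<in> L \<Longrightarrow> (y, x) \<in> L \<Longrightarrow> x = y"
  using order by (auto simp: linear_order_on_def partial_order_on_def antisym_def)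

lemma L_total: "x \<in> X \<Longrightarrow> y \<in> X \<Longrightarrow> (x, y) \<in> L \<or> (y, x) \<in> L"
  using order L_refl by (cases "x = y") (auto simp: linear_order_on_def total_on_def)

lemma adj_X_Y:
  assumes "x \<in> X" "x' \<in> X"
  shows "adj E x (\<phi> x') \<longleftrightarrow> (x, x') \<in> L"
proof
  assume "adj E x (\<phi> x')"
  then obtain u u' where u: "{x, \<phi> x'} = {u, \<phi> u'}" "u \<in> X" "u' \<in> X" "(u, u') \<in> L"
    using edges unfolding adj_def by blast
  have "x \<noteq> \<phi> u'" using disjoint assms(1) u(3) by blast
  with u(1) have "x = u" "\<phi> x' = \<phi> u'" by (auto simp: doubleton_eq_iff)
  moreover from this have "x' = u'" using inj assms(2) u(3) by (metis inj_on_eq_iff)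
  ultimately show "(x, x') \<in> L" using u(4) by simp
qed (use assms edges in \<open>auto simp: adj_def\<close>)

lemma not_adj_X_X: "x \<in> X \<Longrightarrow> z \<in> X \<Longrightarrow> \<not> adj E x z"
  using disjoint unfolding edges adj_def by (auto simp: doubleton_eq_iff)

lemma not_adj_Y_Y: "x \<in> X \<Longrightarrow> z \<in> X \<Longrightarrow> \<not> adj E (\<phi> x) (\<phi> z)"
  using disjoint unfolding edges adj_def by (auto simp: doubleton_eq_iff)

context
  fixes M assumes module: "is_module V E M"
begin

lemma module_mem_below:
  assumes "x \<in> X" "x \<in> M" "y \<in> X" "\<phi> y \<in> M" "c \<in> X" "(c, y) \<in> L"
  shows "c \<in> M"
proof (rule module_mem_if_separates[OF module _ _ assms(2)])
  show "adj E c (\<phi> y)" using adj_X_Y assms by blast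
  show "\<not> adj E c x" using not_adj_X_X assms by blast
qed (use assms vertices in auto)

lemma module_mem_image_above:
  assumes "x \<in> X" "x \<in> M" "y \<in> X" "\<phi> y \<in> M" "c \<in> X" "(x, c) \<in> L"
  shows "\<phi> c \<in> M"
proof (rule module_mem_if_separates[OF module _ assms(2) assms(4)])
  show "adj E (\<phi> c) x" using adj_X_Y assms adj_commute by metis
  show "\<not> adj E (\<phi> c) (\<phi> y)" using not_adj_Y_Y assms by blast
qed (use assms vertices in auto)

lemma module_eq_if_mem_pair:
  assumes "z \<in> X" "z \<in> M" "\<phi> z \<in> M"
  shows "M = V"
proof -
  have "d \<in> M \<and> \<phi> d \<in> M" if d: "d \<in> X" for d
  proof (cases "(d, z) \<in> L")
    case True
    then have "d \<in> M" using module_mem_below assms d by blast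
    then show ?thesis using module_mem_image_above[of d z d] assms d L_refl by blast
  next
    case False
    then have "\<phi> d \<in> M" using module_mem_image_above assms d L_total by blast
    then show ?thesis using module_mem_below[of z d d] assms d L_refl by blast
  qed
  then show ?thesis using module vertices unfolding is_module_def by blast
qed

lemma module_mem_pair_if_mem_X_Y:
  assumes "x \<in> X" "x \<in> M" "y \<in> X" "\<phi> y \<in> M"
  obtains z where "z \<in> X" "z \<in> M" "\<phi> z \<in> M"
  using module_mem_below[OF assms assms(3) L_refl[OF assms(3)]] assms(3,4) by blast

lemma module_mem_image_if_two_in_X:
  assumes "a \<in> X" "b \<in> X" "a \<in> M" "b \<in> M" "a \<noteq> b" "(a, b) \<in> L"
  shows "\<phi> a \<in> M"
proof (rule module_mem_if_separates[OF module _ assms(3) assms(4)])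
  show "adj E (\<phi> a) a" using adj_X_Y assms L_refl adj_commute by metis
  show "\<not> adj E (\<phi> a) b" using adj_X_Y assms L_antisym adj_commute by metis
qed (use assms vertices in auto)

lemma module_mem_if_two_images:
  assumes "a \<in> X" "b \<in> X" "\<phi> a \<in> M" "\<phi> b \<in> M" "a \<noteq> b" "(a, b) \<in> L"
  shows "b \<in> M"
proof (rule module_mem_if_separates[OF module _ assms(4) assms(3)])
  show "adj E b (\<phi> b)" using adj_X_Y assms L_refl by metis
  show "\<not> adj E b (\<phi> a)" using adj_X_Y assms L_antisym by metis
qed (use assms vertices in auto)

lemma module_eq_if_two_members:
  assumes "p \<in> M" "q \<in> M" "p \<noteq> q"
  shows "M = V"
proof -
  have "\<exists>x y. x \<in> X \<and> x \<in> M \<and> y \<in> X \<and> \<phi> y \<in> M"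
  proof -
    have "p \<in> V" "q \<in> V" using module assms unfolding is_module_def by auto
    then consider "p \<in> X" "q \<in> X" | "p \<in> \<phi> ` X" "q \<in> \<phi> ` X" | "p \<in> X \<or> q \<in> X"
        "p \<in> \<phi> ` X \<or> q \<in> \<phi> ` X"
      using vertices by blast
    then show ?thesis
    proof cases
      case 1
      then show ?thesis
        using L_total module_mem_image_if_two_in_X assms by metis
    next
      case 2
      then obtain a b where "a \<in> X" "b \<in> X" "p = \<phi> a" "q = \<phi> b" "a \<noteq> b"
        using assms(3) by blast
      then show ?thesis
        using L_total module_mem_if_two_images assms by metis
    qed (use assms in blast)
  qed
  then show ?thesis using module_mem_pair_if_mem_X_Y module_eq_if_mem_pair by blast
qed

end

lemma module_trivial: "is_module V E M \<Longrightarrow> trivial_module V M"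
  using module_eq_if_two_members unfolding trivial_module_def by blast

end

lemma half_graph_module_trivial:
  assumes "half_graph V E" "is_module V E M"
  shows "trivial_module V M"
proof -
  obtain X Y L \<phi> where "X \<inter> Y = {}" "V = X \<union> Y" "linear_order_on X L" "bij_betw \<phi> X Y"
    "E = {{x, \<phi> x'} | x x'. x \<in> X \<and> x' \<in> X \<and> (x, x') \<in> L}"
    using assms(1) unfolding half_graph_def by blast
  then have "half_graph_repr V E X L \<phi>"
    by unfold_locales (auto simp: bij_betw_def)
  then show ?thesis using half_graph_repr.module_trivial assms(2) by blast
qed

theorem corollary5p4:
  fixes V :: "'a set" and E :: "'a set set"
  assumes "half_graph V E" and "card_ge V 4"
  shows "prime_graph V E"
proof -
  have "card_ge V 3" using assms(2) unfolding card_ge_def by auto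
  then show ?thesis
    using half_graph_module_trivial[OF assms(1)] unfolding prime_graph_def by blast
qed

end
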